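(* Let $\alpha>0$, $\varepsilon>0$, and let $K$ be the set of all items that are ever added to the tentative solution $I$ during Phase A and Phase B (including items that are later removed by an exchange). Then \[ \mathbb E[w(K\setminus D)]\ \ge\ (1-\varepsilon)\,\mathbb E[w(K)], \] where the expectation is over the random sampling in Phase A.
   Context: Setting. $V$ is a finite ground set of $n=|V|$ items arriving one at a time in a fixed stream order. $f:2^V\to\mathbb R_{\ge 0}$ is non-decreasing and submodular with $f(\emptyset)=0$; write $f(v\mid X)=f(X\cup\{v\})-f(X)$. $\mathcal M=\mathcal M_1\cap\dots\cap\mathcal M_p$ is the intersection of $p$ matroids $\mathcal M_1,\dots,\mathcal M_p$ on $V$ (a "$p$-matroid"); a set is feasible if it lies in $\mathcal M$; the rank is $r=\max_{S\in\mathcal M}|S|$. $d\ge 0$ is an integer and $D\subseteq V$ is a deletion set with $|D|\le d$, fixed in advance and independent of the algorithm's random bits (static adversary). Weights. Items receive a weight $w(v)\ge 0$ when processed, as specified below; for a set $S$, $w(S)=\sum_{u\in S}w(u)$ (with $w(\emptyset)=0$). Exchange$(v,I)$: for each $j\in[p]$ with $I\cup\{v\}\notin\mathcal M_j$, let $u_j\in\arg\min\{w(u): u\in I,\ (I\cup\{v\})\setminus\{u\}\in\mathcal M_j\}$; return the set $\{u_j\}$ of these items (empty if $I\cup\{v\}\in\mathcal M$). Phase A (streaming, parameters $\varepsilon,\alpha>0$): initialize $I=\emptyset$, $C=\emptyset$. For each arriving item $v'$ of $V$ in stream order: (1) $C\gets C\cup\{v'\}$; (2) $C\gets\{v\in C: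 f(v\mid I)\ge (1+\alpha)\,w(\mathrm{Exchange}(v,I))\}$; (3) if $|C|\ge d/\varepsilon$, sample one item $v\in C$ at random with probability proportional to $1/f(v\mid I)$, set $w(v)=f(v\mid I)$, and set $I\gets (I\cup\{v\})\setminus \mathrm{Exchange}(v,I)$. At the end output $S_1:=I$ and the buffer $C$. The coreset is $R=S_1\cup C$. Phase B (after deletions, parameter $\alpha$): start with $I=S_1$. For each $v\in C\setminus D$: set $w(v)=f(v\mid I)$, $S=\mathrm{Exchange}(v,I)$, and if $w(v)\ge(1+\alpha)w(S)$ set $I\gets(I\cup\{v\})\setminus S$. Let $S_2$ be the final $I$; output $\mathrm{ALG}=S_2\setminus D$. *)

theory Defs
  imports "HOL-Probability.Probability_Mass_Function"
begin

definition matroid :: "'a set \<Rightarrow> ('a set \<Rightarrow> bool) \<Rightarrow> bool" where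
  "matroid V M \<longleftrightarrow> finite V \<and> (\<forall>S. M S \<longrightarrow> S \<subseteq> V) \<and> M {} \<and>
     (\<forall>A B. M B \<longrightarrow> A \<subseteq> B \<longrightarrow> M A) \<and>
     (\<forall>A B. M A \<longrightarrow> M B \<longrightarrow> card A < card B \<longrightarrow> (\<exists>x\<in>B - A. M (insert x A)))"

definition monotone_submodular :: "'a set \<Rightarrow> ('a set \<Rightarrow> real) \<Rightarrow> bool" where
  "monotone_submodular V f \<longleftrightarrow> f {} = 0 \<and> (\<forall>S. S \<subseteq> V \<longrightarrow> f S \<ge> 0) \<and>
     (\<forall>A B. A \<subseteq> B \<longrightarrow> B \<subseteq> V \<longrightarrow> f A \<le> f B) \<and>
     (\<forall>A B v. A \<subseteq> B \<longrightarrow> B \<subseteq> V \<longrightarrow> v \<in> V - B \<longrightarrow>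
        f (insert v A) - f A \<ge> f (insert v B) - f B)"

definition marg :: "('a set \<Rightarrow> real) \<Rightarrow> 'a \<Rightarrow> 'a set \<Rightarrow> real" where
  "marg f v X = f (insert v X) - f X"

(* Exchange(v,I) for the p matroids Ms 0, ..., Ms (p-1); ties in the argmin are broken by
   the (arbitrary, fixed) choice function ch. *)
definition exch :: "nat \<Rightarrow> (nat \<Rightarrow> 'a set \<Rightarrow> bool) \<Rightarrow> ('a set \<Rightarrow> 'a) \<Rightarrow> ('a \<Rightarrow> real)
                     \<Rightarrow> 'a \<Rightarrow> 'a set \<Rightarrow> 'a set" where
  "exch p Ms ch w v I =
     {ch {u \<in> I. Ms j ((I \<union> {v}) - {u}) \<and>
                (\<forall>u'\<in>I. Ms j ((I \<union> {v}) - {u'}) \<longrightarrow> w u \<le> w u')}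
      | j. j < p \<and> \<not> Ms j (I \<union> {v})}"

(* Sample v in C with probability proportional to 1/g v.  Convention for g v = 0
   (weight 1/0 = infinity): sample uniformly among the items of C with g v = 0. *)
definition samp :: "('a \<Rightarrow> real) \<Rightarrow> 'a set \<Rightarrow> 'a pmf" where
  "samp g C = (if \<exists>v\<in>C. g v = 0 then pmf_of_set {v \<in> C. g v = 0}
               else embed_pmf (\<lambda>v. if v \<in> C then (1 / g v) / (\<Sum>u\<in>C. 1 / g u) else 0))"

(* state: (I, C, w, K); K = set of all items ever added to I *)
type_synonym 'a st = "'a set \<times> 'a set \<times> ('a \<Rightarrow> real) \<times> 'a set"

definition stepA :: "nat \<Rightarrow> (nat \<Rightarrow> 'a set \<Rightarrow> bool) \<Rightarrow> ('a set \<Rightarrow> 'a) \<Rightarrow> ('a set \<Rightarrow> real)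
                     \<Rightarrow> nat \<Rightarrow> real \<Rightarrow> real \<Rightarrow> 'a st \<Rightarrow> 'a \<Rightarrow> 'a st pmf" where
  "stepA p Ms ch f d \<epsilon> \<alpha> s v' =
     (case s of (I, C, w, K) \<Rightarrow>
       (let C1 = insert v' C;
            C2 = {v \<in> C1. marg f v I \<ge> (1 + \<alpha>) * sum w (exch p Ms ch w v I)}
        in if C2 \<noteq> {} \<and> real (card C2) \<ge> real d / \<epsilon> then
             map_pmf (\<lambda>v. ((I \<union> {v}) - exch p Ms ch w v I, C2 - {v},
                           w(v := marg f v I), insert v K))
                     (samp (\<lambda>v. marg f v I) C2)
           else return_pmf (I, C2, w, K)))"

definition phaseA :: "nat \<Rightarrow> (nat \<Rightarrow> 'a set \<Rightarrow> bool) \<Rightarrow> ('a set \<Rightarrow> 'a) \<Rightarrow> ('a set \<Rightarrow> real)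
                      \<Rightarrow> nat \<Rightarrow> real \<Rightarrow> real \<Rightarrow> 'a list \<Rightarrow> 'a st pmf" where
  "phaseA p Ms ch f d \<epsilon> \<alpha> vs =
     foldl (\<lambda>P v'. bind_pmf P (\<lambda>s. stepA p Ms ch f d \<epsilon> \<alpha> s v'))
           (return_pmf ({}, {}, (\<lambda>_. 0), {})) vs"

definition stepB :: "nat \<Rightarrow> (nat \<Rightarrow> 'a set \<Rightarrow> bool) \<Rightarrow> ('a set \<Rightarrow> 'a) \<Rightarrow> ('a set \<Rightarrow> real)
                     \<Rightarrow> real \<Rightarrow> 'a st \<Rightarrow> 'a \<Rightarrow> 'a st" where
  "stepB p Ms ch f \<alpha> s v =
     (case s of (I, C, w, K) \<Rightarrow>
       (let wv = marg f v I; S = exch p Ms ch w v I; w' = w(v := wv)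
        in if wv \<ge> (1 + \<alpha>) * sum w S then ((I \<union> {v}) - S, C, w', insert v K)
           else (I, C, w', K)))"

definition phaseB :: "nat \<Rightarrow> (nat \<Rightarrow> 'a set \<Rightarrow> bool) \<Rightarrow> ('a set \<Rightarrow> 'a) \<Rightarrow> ('a set \<Rightarrow> real)
                      \<Rightarrow> real \<Rightarrow> 'a list \<Rightarrow> 'a set \<Rightarrow> 'a st \<Rightarrow> 'a st" where
  "phaseB p Ms ch f \<alpha> vs D s =
     (case s of (I, C, w, K) \<Rightarrow>
        foldl (stepB p Ms ch f \<alpha>) s (filter (\<lambda>v. v \<in> C \<and> v \<notin> D) vs))"

definition run :: "nat \<Rightarrow> (nat \<Rightarrow> 'a set \<Rightarrow> bool) \<Rightarrow> ('a set \<Rightarrow> 'a) \<Rightarrow> ('a set \<Rightarrow> real)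
                   \<Rightarrow> nat \<Rightarrow> real \<Rightarrow> real \<Rightarrow> 'a list \<Rightarrow> 'a set \<Rightarrow> 'a st pmf" where
  "run p Ms ch f d \<epsilon> \<alpha> vs D = map_pmf (phaseB p Ms ch f \<alpha> vs D) (phaseA p Ms ch f d \<epsilon> \<alpha> vs)"

end

theory Submission
  imports Defs
begin

(* Write K for the set of accepted items and w for their weights.  Phase B accepts only items
   outside D and never changes the weight of an item accepted in Phase A (such items have left
   the buffer), so w(K \<inter> D) is frozen at the end of Phase A while w(K) can only grow.  It
   therefore suffices that the potential \<epsilon> w(K) - w(K \<inter> D) does not decrease in expectation
   during Phase A.  A sampling step draws v from the buffer C with probability proportional to
   1/m(v), where m(v) = f(v | I) becomes the weight of v; hence every item of C contributes the
   same amount to E[m(v)], and the at most d \<le> \<epsilon> |C| deleted items contribute at most an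
   \<epsilon>-fraction of it.  Neither the matroids nor the exchange rule nor \<alpha> play any role. *)

lemma pmf_samp_pos:
  fixes m :: "'a \<Rightarrow> real"
  assumes "finite C" "C \<noteq> {}" "\<forall>v\<in>C. m v > 0"
  shows "pmf (samp m C) v = (if v \<in> C then 1 / m v / (\<Sum>u\<in>C. 1 / m u) else 0)"
proof -
  define S where "S = (\<Sum>u\<in>C. 1 / m u)"
  have "S > 0" unfolding S_def using assms by (intro sum_pos) auto
  define g where "g = (\<lambda>v. if v \<in> C then 1 / m v / S else 0)"
  have g_nonneg: "0 \<le> g x" for x using \<open>S > 0\<close> assms(3) by (auto simp: g_def less_imp_le)
  have "(\<integral>\<^sup>+x. ennreal (g x) \<partial>count_space UNIV) = (\<Sum>x\<in>C. ennreal (g x))"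
    using assms(1) by (subst nn_integral_count_space'[of C]) (auto simp: g_def)
  also have "\<dots> = ennreal (\<Sum>x\<in>C. 1 / m x / S)"
    using \<open>S > 0\<close> assms(3) by (subst sum_ennreal) (auto simp: g_def less_imp_le)
  also have "(\<Sum>x\<in>C. 1 / m x / S) = S / S"
    unfolding S_def by (rule sum_divide_distrib[symmetric])
  also have "S / S = 1"
    using \<open>S > 0\<close> by simp
  finally have "(\<integral>\<^sup>+x. ennreal (g x) \<partial>count_space UNIV) = 1" by simp
  moreover have "samp m C = embed_pmf g"
    unfolding samp_def g_def S_def using assms(3) by auto
  ultimately show ?thesis
    using g_nonneg by (simp add: pmf_embed_pmf g_def S_def)
qed

lemma set_pmf_samp_zero:
  assumes "\<exists>v\<in>C. m v = 0" "finite C"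
  shows "set_pmf (samp m C) = {v \<in> C. m v = 0}"
proof -
  have "{v \<in> C. m v = 0} \<noteq> {}" "finite {v \<in> C. m v = 0}" using assms by auto
  then show ?thesis using assms(1) by (simp add: samp_def)
qed

lemma set_pmf_samp_subset:
  fixes m :: "'a \<Rightarrow> real"
  assumes "finite C" "C \<noteq> {}" "\<forall>v\<in>C. m v \<ge> 0"
  shows "set_pmf (samp m C) \<subseteq> C"
proof (cases "\<exists>v\<in>C. m v = 0")
  case True
  then have "set_pmf (samp m C) = {v \<in> C. m v = 0}"
    using assms(1) by (rule set_pmf_samp_zero)
  then show ?thesis by auto
next
  case False
  then show ?thesis
    using assms by (auto simp: set_pmf_eq pmf_samp_pos order_le_less)
qed

lemma expectation_samp_equal_contribution:
  fixes m :: "'a \<Rightarrow> real"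
  assumes "finite C" "C \<noteq> {}" "\<forall>v\<in>C. m v \<ge> 0"
  shows "measure_pmf.expectation (samp m C) (\<lambda>v. if v \<in> A then m v else 0) * card C
       = card (C \<inter> A) * measure_pmf.expectation (samp m C) m"
proof (cases "\<exists>v\<in>C. m v = 0")
  case True
  then have "set_pmf (samp m C) = {v \<in> C. m v = 0}"
    using assms(1) by (rule set_pmf_samp_zero)
  then have "measure_pmf.expectation (samp m C) h = 0"
    if "\<And>v. m v = 0 \<Longrightarrow> h v = 0" for h :: "'a \<Rightarrow> real"
    using that by (subst integral_measure_pmf_real[where A="{}"]) auto
  then show ?thesis by simp
next
  case False
  then have pos: "\<forall>v\<in>C. m v > 0" using assms(3) by force
  define S where "S = (\<Sum>u\<in>C. 1 / m u)"
  have "measure_pmf.expectation (samp m C) h = (\<Sum>v\<in>C. h v / m v) / S" for h :: "'a \<Rightarrow> real"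
    using set_pmf_samp_subset[OF assms] assms(1) pos
    by (subst integral_measure_pmf_real[where A=C])
       (auto simp: pmf_samp_pos[OF assms(1,2) pos] S_def sum_divide_distrib intro!: sum.cong)
  moreover have "(\<Sum>v\<in>C. (if v \<in> A then m v else 0) / m v) = (\<Sum>v\<in>C. if v \<in> A then 1 else 0)"
    using pos by (intro sum.cong) auto
  moreover have "(\<Sum>v\<in>C. if v \<in> A then 1 else 0) = real (card (C \<inter> A))"
    using assms(1) by (simp add: sum.If_cases Int_commute)
  moreover have "(\<Sum>v\<in>C. m v / m v) = (\<Sum>v\<in>C. 1)"
    using pos by (intro sum.cong) auto
  ultimately show ?thesis by simp
qed

lemma expectation_samp_restrict_le:
  fixes m :: "'a \<Rightarrow> real"
  assumes "finite C" "C \<noteq> {}" "\<forall>v\<in>C. m v \<ge> 0"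
    and "real (card (C \<inter> A)) \<le> e * real (card C)"
  shows "measure_pmf.expectation (samp m C) (\<lambda>v. if v \<in> A then m v else 0)
       \<le> e * measure_pmf.expectation (samp m C) m"
proof -
  have "0 \<le> measure_pmf.expectation (samp m C) m"
    using set_pmf_samp_subset[OF assms(1-3)] assms(3)
    by (intro integral_nonneg_AE) (auto simp: AE_measure_pmf_iff)
  then have "card C * measure_pmf.expectation (samp m C) (\<lambda>v. if v \<in> A then m v else 0)
      \<le> card C * (e * measure_pmf.expectation (samp m C) m)"
    using assms(4) expectation_samp_equal_contribution[OF assms(1-3), of A]
    by (simp add: mult_right_mono mult.assoc[symmetric] mult.commute)
  moreover have "card C > 0" using assms(1,2) by (simp add: card_gt_0_iff)
  ultimately show ?thesis
    by (simp add: mult_le_cancel_left_pos)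
qed

lemma expectation_bind_pmf_ge:
  fixes \<Phi> :: "'b \<Rightarrow> real"
  assumes "finite (set_pmf M)" "\<And>s. s \<in> set_pmf M \<Longrightarrow> finite (set_pmf (N s))"
    and "\<And>s. s \<in> set_pmf M \<Longrightarrow> \<Phi> s \<le> measure_pmf.expectation (N s) \<Phi>"
  shows "measure_pmf.expectation M \<Phi> \<le> measure_pmf.expectation (bind_pmf M N) \<Phi>"
proof -
  have "measure_pmf.expectation M \<Phi> = (\<Sum>s\<in>set_pmf M. pmf M s * \<Phi> s)"
    using assms(1) by (subst integral_measure_pmf[where A="set_pmf M"]) auto
  also have "\<dots> \<le> (\<Sum>s\<in>set_pmf M. pmf M s * measure_pmf.expectation (N s) \<Phi>)"
    using assms(3) by (intro sum_mono mult_left_mono) auto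
  also have "\<dots> = measure_pmf.expectation (bind_pmf M N) \<Phi>"
    using assms(1,2) by (subst pmf_expectation_bind[where A="set_pmf M"]) auto
  finally show ?thesis .
qed

definition total_weight :: "'a st \<Rightarrow> real" where
  "total_weight = (\<lambda>(I, C, w, K). sum w K)"

definition deleted_weight :: "'a set \<Rightarrow> 'a st \<Rightarrow> real" where
  "deleted_weight D = (\<lambda>(I, C, w, K). sum w (K \<inter> D))"

definition deletion_potential :: "real \<Rightarrow> 'a set \<Rightarrow> 'a st \<Rightarrow> real" where
  "deletion_potential \<epsilon> D s = \<epsilon> * total_weight s - deleted_weight D s"

definition phaseA_invariant :: "'a set \<Rightarrow> 'a list \<Rightarrow> 'a st \<Rightarrow> bool" where
  "phaseA_invariant V xs = (\<lambda>(I, C, w, K).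
     I \<subseteq> V \<and> C \<subseteq> set xs \<and> K \<subseteq> set xs \<and> C \<inter> K = {} \<and> (\<forall>u. 0 \<le> w u))"

lemma expectation_deletion_potential:
  assumes "finite (set_pmf M)"
  shows "measure_pmf.expectation M (deletion_potential \<epsilon> D)
       = \<epsilon> * measure_pmf.expectation M total_weight - measure_pmf.expectation M (deleted_weight D)"
  unfolding deletion_potential_def
  using integrable_measure_pmf_finite[OF assms]
  by (subst Bochner_Integration.integral_diff) auto

lemma marg_nonneg:
  assumes "monotone_submodular V f" "v \<in> V" "I \<subseteq> V"
  shows "0 \<le> marg f v I"
  using assms unfolding monotone_submodular_def marg_def by (simp add: subset_insertI)

lemma weights_insert:
  fixes w :: "'a \<Rightarrow> real"
  assumes "v \<notin> K" "finite K"
  shows "total_weight (I, C, w(v := x), insert v K) = sum w K + x"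
    and "deleted_weight D (I, C, w(v := x), insert v K) = sum w (K \<inter> D) + (if v \<in> D then x else 0)"
  using assms by (auto simp: total_weight_def deleted_weight_def Int_insert_left
      sum.insert_if intro!: sum.cong)

lemma deletion_potential_sample_step:
  fixes m w :: "'a \<Rightarrow> real"
  assumes "finite K" "finite C" "C \<noteq> {}" "C \<inter> K = {}" "\<forall>v\<in>C. 0 \<le> m v"
    and "real (card (C \<inter> D)) \<le> \<epsilon> * real (card C)"
  shows "deletion_potential \<epsilon> D (I, C0, w, K) \<le> measure_pmf.expectation
           (map_pmf (\<lambda>v. (J v, C' v, w(v := m v), insert v K)) (samp m C)) (deletion_potential \<epsilon> D)"
proof -
  let ?\<Phi> = "deletion_potential \<epsilon> D"
  let ?gain = "\<lambda>v. \<epsilon> * m v - (if v \<in> D then m v else 0)"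
  have supp: "set_pmf (samp m C) \<subseteq> C"
    using set_pmf_samp_subset[OF assms(2,3,5)] .
  have "?\<Phi> (J v, C' v, w(v := m v), insert v K) = ?\<Phi> (I, C0, w, K) + ?gain v" if "v \<in> C" for v
  proof -
    have "v \<notin> K" using that assms(4) by auto
    then show ?thesis
      using assms(1) by (simp add: deletion_potential_def weights_insert algebra_simps,
          simp add: total_weight_def deleted_weight_def)
  qed
  then have "measure_pmf.expectation (map_pmf (\<lambda>v. (J v, C' v, w(v := m v), insert v K)) (samp m C)) ?\<Phi>
      = measure_pmf.expectation (samp m C) (\<lambda>v. ?\<Phi> (I, C0, w, K) + ?gain v)"
    unfolding integral_map_pmf using supp
    by (intro integral_cong_AE) (auto simp: AE_measure_pmf_iff)
  also have "\<dots> = ?\<Phi> (I, C0, w, K) + (\<epsilon> * measure_pmf.expectation (samp m C) m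
      - measure_pmf.expectation (samp m C) (\<lambda>v. if v \<in> D then m v else 0))"
    using finite_subset[OF supp assms(2)]
    by (simp add: integrable_measure_pmf_finite Bochner_Integration.integral_add
        Bochner_Integration.integral_diff)
  finally show ?thesis
    using expectation_samp_restrict_le[OF assms(2,3,5,6)] by simp
qed

lemma stepA_potential:
  assumes ms: "monotone_submodular V f" and inv: "phaseA_invariant V xs s"
    and fresh: "v' \<in> V" "v' \<notin> set xs" "set xs \<subseteq> V"
    and D: "finite D" "card D \<le> d" and "\<epsilon> > 0"
  shows "finite (set_pmf (stepA p Ms ch f d \<epsilon> \<alpha> s v'))"
    and "\<forall>t\<in>set_pmf (stepA p Ms ch f d \<epsilon> \<alpha> s v'). phaseA_invariant V (xs @ [v']) t"
    and "deletion_potential \<epsilon> D s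
           \<le> measure_pmf.expectation (stepA p Ms ch f d \<epsilon> \<alpha> s v') (deletion_potential \<epsilon> D)"
proof -
  let ?S = "stepA p Ms ch f d \<epsilon> \<alpha> s v'"
  obtain I C w K where s: "s = (I, C, w, K)" by (cases s) auto
  have I: "I \<subseteq> V" and "C \<subseteq> set xs" "K \<subseteq> set xs" "C \<inter> K = {}" and w: "\<forall>u. 0 \<le> w u"
    using inv by (auto simp: s phaseA_invariant_def)
  define m where "m v = marg f v I" for v
  define C2 where "C2 = {v \<in> insert v' C. m v \<ge> (1 + \<alpha>) * sum w (exch p Ms ch w v I)}"
  define F where "F v = ((I \<union> {v}) - exch p Ms ch w v I, C2 - {v}, w(v := m v), insert v K)" for v
  have C2: "C2 \<subseteq> V" "finite C2" "C2 \<inter> K = {}"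
    using \<open>C \<subseteq> set xs\<close> \<open>K \<subseteq> set xs\<close> \<open>C \<inter> K = {}\<close> fresh
    by (auto simp: C2_def intro: finite_subset)
  have m: "\<forall>v\<in>C2. 0 \<le> m v" using marg_nonneg[OF ms _ I] C2(1) by (auto simp: m_def)
  have "finite K" using \<open>K \<subseteq> set xs\<close> finite_subset by blast
  have inv_C2: "phaseA_invariant V (xs @ [v']) (I, C2, w, K)"
    using I w \<open>C \<subseteq> set xs\<close> \<open>K \<subseteq> set xs\<close> C2(3) by (auto simp: phaseA_invariant_def C2_def)
  have "?S = (if C2 \<noteq> {} \<and> real d / \<epsilon> \<le> real (card C2)
      then map_pmf F (samp m C2) else return_pmf (I, C2, w, K))"
    unfolding s stepA_def Let_def prod.case C2_def F_def m_def ..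
  then consider (sample) "C2 \<noteq> {}" "real d / \<epsilon> \<le> real (card C2)" "?S = map_pmf F (samp m C2)"
    | (skip) "?S = return_pmf (I, C2, w, K)"
    by (cases "C2 \<noteq> {} \<and> real d / \<epsilon> \<le> real (card C2)") auto
  then have "finite (set_pmf ?S) \<and> (\<forall>t\<in>set_pmf ?S. phaseA_invariant V (xs @ [v']) t) \<and>
      deletion_potential \<epsilon> D s \<le> measure_pmf.expectation ?S (deletion_potential \<epsilon> D)"
  proof cases
    case sample
    have supp: "set_pmf (samp m C2) \<subseteq> C2"
      using set_pmf_samp_subset[OF C2(2) sample(1) m] .
    have "\<forall>t\<in>set_pmf ?S. phaseA_invariant V (xs @ [v']) t"
    proof
      fix t assume "t \<in> set_pmf ?S"
      then obtain v where "v \<in> C2" "t = F v" using supp sample(3) by auto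
      then show "phaseA_invariant V (xs @ [v']) t"
        using inv_C2 m w C2(1) unfolding phaseA_invariant_def F_def by auto
    qed
    moreover have "finite (set_pmf ?S)"
      using finite_subset[OF supp C2(2)] sample(3) by simp
    moreover have "real (card (C2 \<inter> D)) \<le> \<epsilon> * real (card C2)"
      using card_mono[OF D(1), of "C2 \<inter> D"] D(2) sample(2) \<open>\<epsilon> > 0\<close>
      by (simp add: field_simps)
    then have "deletion_potential \<epsilon> D s
        \<le> measure_pmf.expectation (map_pmf F (samp m C2)) (deletion_potential \<epsilon> D)"
      unfolding s F_def by (rule deletion_potential_sample_step[OF \<open>finite K\<close> C2(2) sample(1) C2(3) m])
    ultimately show ?thesis
      using sample(3) by simp
  next
    case skip
    then show ?thesis
      using inv_C2 by (auto simp: deletion_potential_def s total_weight_def deleted_weight_def)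
  qed
  then show "finite (set_pmf ?S)" "\<forall>t\<in>set_pmf ?S. phaseA_invariant V (xs @ [v']) t"
    "deletion_potential \<epsilon> D s \<le> measure_pmf.expectation ?S (deletion_potential \<epsilon> D)"
    by auto
qed

lemma phaseA_potential:
  assumes ms: "monotone_submodular V f"
    and D: "finite D" "card D \<le> d" and "\<epsilon> > 0"
    and "distinct xs" "set xs \<subseteq> V"
  shows "finite (set_pmf (phaseA p Ms ch f d \<epsilon> \<alpha> xs)) \<and>
    (\<forall>s\<in>set_pmf (phaseA p Ms ch f d \<epsilon> \<alpha> xs). phaseA_invariant V xs s) \<and>
    0 \<le> measure_pmf.expectation (phaseA p Ms ch f d \<epsilon> \<alpha> xs) (deletion_potential \<epsilon> D)"
  using assms(5,6)
proof (induction xs rule: rev_induct)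
  case Nil
  show ?case
    by (simp add: phaseA_def phaseA_invariant_def deletion_potential_def total_weight_def
        deleted_weight_def)
next
  case (snoc v' xs)
  let ?P = "phaseA p Ms ch f d \<epsilon> \<alpha> xs"
  let ?step = "\<lambda>s. stepA p Ms ch f d \<epsilon> \<alpha> s v'"
  have "v' \<notin> set xs" "v' \<in> V" using snoc.prems by auto
  have IH: "finite (set_pmf ?P)" "\<forall>s\<in>set_pmf ?P. phaseA_invariant V xs s"
      "0 \<le> measure_pmf.expectation ?P (deletion_potential \<epsilon> D)"
    using snoc by auto
  note step = stepA_potential[OF ms _ \<open>v' \<in> V\<close> \<open>v' \<notin> set xs\<close> _ D \<open>\<epsilon> > 0\<close>]
  have "phaseA p Ms ch f d \<epsilon> \<alpha> (xs @ [v']) = bind_pmf ?P ?step"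
    by (simp add: phaseA_def)
  moreover have "measure_pmf.expectation ?P (deletion_potential \<epsilon> D)
      \<le> measure_pmf.expectation (bind_pmf ?P ?step) (deletion_potential \<epsilon> D)"
    using IH(1,2) snoc.prems step(1,3) by (intro expectation_bind_pmf_ge) auto
  moreover have "finite (set_pmf (bind_pmf ?P ?step))"
    using IH(1,2) snoc.prems step(1) by (simp add: set_bind_pmf)
  moreover have "\<forall>t\<in>set_pmf (bind_pmf ?P ?step). phaseA_invariant V (xs @ [v']) t"
    using IH(2) snoc.prems step(2) by (auto simp: set_bind_pmf)
  ultimately show ?case
    using IH(3) by simp
qed

lemma phaseB_foldl:
  assumes ms: "monotone_submodular V f"
  shows "I \<subseteq> V \<Longrightarrow> set L \<subseteq> V \<Longrightarrow> \<forall>u. 0 \<le> w u \<Longrightarrow>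
    foldl (stepB p Ms ch f \<alpha>) (I, C, w, K) L = (I', C', w', K') \<Longrightarrow>
    (\<forall>u. 0 \<le> w' u) \<and> K \<subseteq> K' \<and> K' \<subseteq> K \<union> set L \<and> (\<forall>u. u \<notin> set L \<longrightarrow> w' u = w u)"
proof (induction L arbitrary: I w K)
  case Nil
  then show ?case by simp
next
  case (Cons v L)
  have "0 \<le> marg f v I" using marg_nonneg[OF ms _ Cons.prems(1)] Cons.prems(2) by simp
  then have w: "\<forall>u. 0 \<le> (w(v := marg f v I)) u" using Cons.prems(3) by simp
  obtain I2 K2 where step: "stepB p Ms ch f \<alpha> (I, C, w, K) v = (I2, C, w(v := marg f v I), K2)"
      and "I2 \<subseteq> V" "K \<subseteq> K2" "K2 \<subseteq> insert v K"
  proof (cases "(1 + \<alpha>) * sum w (exch p Ms ch w v I) \<le> marg f v I")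
    case True
    then show thesis
      using Cons.prems(1,2) by (intro that[of "(I \<union> {v}) - exch p Ms ch w v I" "insert v K"])
        (auto simp: stepB_def)
  next
    case False
    then show thesis
      using Cons.prems(1) by (intro that[of I K]) (auto simp: stepB_def)
  qed
  have "set L \<subseteq> V" using Cons.prems(2) by simp
  note IH = Cons.IH[OF \<open>I2 \<subseteq> V\<close> this w Cons.prems(4)[unfolded foldl_Cons step]]
  then show ?case
    using \<open>K \<subseteq> K2\<close> \<open>K2 \<subseteq> insert v K\<close> by auto
qed

lemma phaseB_weights:
  assumes ms: "monotone_submodular V f" and "set vs = V" and inv: "phaseA_invariant V vs s"
  shows "(\<lambda>(I, C, w, K). sum w (K - D)) (phaseB p Ms ch f \<alpha> vs D s)
           = total_weight (phaseB p Ms ch f \<alpha> vs D s) - deleted_weight D s"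
    and "total_weight s \<le> total_weight (phaseB p Ms ch f \<alpha> vs D s)"
proof -
  obtain I C w K where s: "s = (I, C, w, K)" by (cases s) auto
  have "I \<subseteq> V" "C \<subseteq> V" "K \<subseteq> V" "C \<inter> K = {}" "\<forall>u. 0 \<le> w u"
    using inv \<open>set vs = V\<close> by (auto simp: s phaseA_invariant_def)
  define L where "L = filter (\<lambda>v. v \<in> C \<and> v \<notin> D) vs"
  obtain I' C' w' K' where B: "phaseB p Ms ch f \<alpha> vs D s = (I', C', w', K')"
    by (cases "phaseB p Ms ch f \<alpha> vs D s") auto
  then have "foldl (stepB p Ms ch f \<alpha>) (I, C, w, K) L = (I', C', w', K')"
    by (simp add: phaseB_def s L_def)
  moreover have L: "set L \<subseteq> C - D" by (auto simp: L_def)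
  moreover have "set L \<subseteq> V" using L \<open>C \<subseteq> V\<close> by blast
  ultimately have w': "\<forall>u. 0 \<le> w' u" and "K \<subseteq> K'" "K' \<subseteq> K \<union> set L"
      and w'_eq: "\<forall>u. u \<notin> set L \<longrightarrow> w' u = w u"
    using phaseB_foldl[OF ms \<open>I \<subseteq> V\<close> _ \<open>\<forall>u. 0 \<le> w u\<close>] by blast+
  have "K' \<subseteq> set vs"
    using \<open>K' \<subseteq> K \<union> set L\<close> \<open>K \<subseteq> V\<close> \<open>set vs = V\<close> by (auto simp: L_def)
  then have "finite K'" using finite_subset by blast
  have "K' \<inter> D = K \<inter> D" and "K \<inter> set L = {}"
    using \<open>K \<subseteq> K'\<close> \<open>K' \<subseteq> K \<union> set L\<close> L \<open>C \<inter> K = {}\<close> by auto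
  then have "sum w' (K' \<inter> D) = sum w (K \<inter> D)"
    using w'_eq by (intro sum.cong) auto
  then show "(\<lambda>(I, C, w, K). sum w (K - D)) (phaseB p Ms ch f \<alpha> vs D s)
           = total_weight (phaseB p Ms ch f \<alpha> vs D s) - deleted_weight D s"
    unfolding B using sum.Int_Diff[OF \<open>finite K'\<close>, of w' D]
    by (simp add: s total_weight_def deleted_weight_def)
  have "sum w K = sum w' K"
    using w'_eq \<open>K \<inter> set L = {}\<close> by (intro sum.cong) auto
  also have "\<dots> \<le> sum w' K'"
    using \<open>finite K'\<close> \<open>K \<subseteq> K'\<close> w' by (intro sum_mono2) auto
  finally show "total_weight s \<le> total_weight (phaseB p Ms ch f \<alpha> vs D s)"
    unfolding B by (simp add: s total_weight_def)
qed

theorem mainTheorem4: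
  fixes V :: "'a set" and vs :: "'a list" and f :: "'a set \<Rightarrow> real"
    and p :: nat and Ms :: "nat \<Rightarrow> 'a set \<Rightarrow> bool" and ch :: "'a set \<Rightarrow> 'a"
    and d :: nat and D :: "'a set" and \<epsilon> \<alpha> :: real
  assumes "finite V" and "distinct vs" and "set vs = V"
    and "monotone_submodular V f"
    and "p \<ge> 1" and "\<forall>j<p. matroid V (Ms j)"
    and "\<forall>S. S \<noteq> {} \<longrightarrow> ch S \<in> S"
    and "D \<subseteq> V" and "card D \<le> d"
    and "\<alpha> > 0" and "\<epsilon> > 0"
  shows "measure_pmf.expectation (run p Ms ch f d \<epsilon> \<alpha> vs D)
           (\<lambda>(I, C, w, K). sum w (K - D))
         \<ge> (1 - \<epsilon>) * measure_pmf.expectation (run p Ms ch f d \<epsilon> \<alpha> vs D)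
           (\<lambda>(I, C, w, K). sum w K)"
proof -
  let ?A = "phaseA p Ms ch f d \<epsilon> \<alpha> vs"
  let ?B = "phaseB p Ms ch f \<alpha> vs D"
  have "finite D" using assms(1,8) finite_subset by blast
  then have fin: "finite (set_pmf ?A)" and inv: "\<forall>s\<in>set_pmf ?A. phaseA_invariant V vs s"
      and "0 \<le> measure_pmf.expectation ?A (deletion_potential \<epsilon> D)"
    using phaseA_potential[OF assms(4) _ assms(9,11,2)] assms(3) by auto
  then have deleted: "measure_pmf.expectation ?A (deleted_weight D)
      \<le> \<epsilon> * measure_pmf.expectation ?A total_weight"
    by (simp add: expectation_deletion_potential[OF fin])
  have "measure_pmf.expectation ?A total_weight \<le> measure_pmf.expectation ?A (total_weight \<circ> ?B)"
    using inv phaseB_weights(2)[OF assms(4,3)]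
    by (intro integral_mono_AE) (auto simp: integrable_measure_pmf_finite[OF fin] AE_measure_pmf_iff)
  then have grown: "\<epsilon> * measure_pmf.expectation ?A total_weight
      \<le> \<epsilon> * measure_pmf.expectation ?A (total_weight \<circ> ?B)"
    using \<open>\<epsilon> > 0\<close> by simp
  have surviving:
    "measure_pmf.expectation (run p Ms ch f d \<epsilon> \<alpha> vs D) (\<lambda>(I, C, w, K). sum w (K - D))
      = measure_pmf.expectation ?A (total_weight \<circ> ?B) - measure_pmf.expectation ?A (deleted_weight D)"
    unfolding run_def integral_map_pmf using inv phaseB_weights(1)[OF assms(4,3)]
    by (subst integral_cong_AE[where g="\<lambda>s. total_weight (?B s) - deleted_weight D s"])
      (auto simp: AE_measure_pmf_iff integrable_measure_pmf_finite[OF fin] comp_def)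
  have total: "measure_pmf.expectation (run p Ms ch f d \<epsilon> \<alpha> vs D) (\<lambda>(I, C, w, K). sum w K)
      = measure_pmf.expectation ?A (total_weight \<circ> ?B)"
    by (simp add: run_def total_weight_def comp_def)
  show ?thesis
    unfolding surviving total using deleted grown by (simp add: algebra_simps)
qed

end
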